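(* Assume $\inf_{x\in X}\mu(B_x(1/2))>0$. If $T\in\mathscr{B}(X)$ is a controlled locally compact operator such that $\|\mathbf{1}_{B_x(1)}T\|\to0$ as $x\to\infty$, then $T$ is compact.
   Context: $(X,d)$ is a non-compact proper metric space, $B_x(r)=\{y:d(x,y)\le r\}$, and $\mu$ is a Radon measure with support $X$ such that $\mu(B_x(r))>0$ and $\sup_x\mu(B_x(r))<\infty$ for all $r>0$. $\mathscr{B}(X)$ is the algebra of bounded operators on $L^2(X,\mu)$; $\mathbf{1}_A$ is multiplication by the characteristic function of measurable $A$. $T$ is controlled if there is $r>0$ such that $\mathbf{1}_FT\mathbf{1}_G=0$ for all closed $F,G$ with $d(F,G)>r$. $T$ is locally compact if $\mathbf{1}_KT$ and $T\mathbf{1}_K$ are compact for every compact $K\subset X$. $x\to\infty$ means $x$ leaves every compact set. *)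

theory Defs
  imports "HOL-Analysis.Analysis"
begin

text \<open>Square-integrable (complex-valued) functions on a measure space; elements of
  L^2(X,mu) are represented by their representatives.\<close>
definition L2 :: "'a measure \<Rightarrow> ('a \<Rightarrow> complex) set" where
  "L2 M = {f. f \<in> borel_measurable M \<and> integrable M (\<lambda>x. (cmod (f x))^2)}"

definition L2norm :: "'a measure \<Rightarrow> ('a \<Rightarrow> complex) \<Rightarrow> real" where
  "L2norm M f = sqrt (\<integral>x. (cmod (f x))^2 \<partial>M)"

text \<open>A bounded operator on L^2(M), given by a linear lift acting on representatives.\<close>
definition bounded_op :: "'a measure \<Rightarrow> (('a \<Rightarrow> complex) \<Rightarrow> ('a \<Rightarrow> complex)) \<Rightarrow> bool" where
  "bounded_op M T \<longleftrightarrow>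
     (\<forall>f\<in>L2 M. T f \<in> L2 M) \<and>
     (\<forall>f\<in>L2 M. \<forall>g\<in>L2 M. T (\<lambda>x. f x + g x) = (\<lambda>x. T f x + T g x)) \<and>
     (\<forall>f\<in>L2 M. \<forall>c. T (\<lambda>x. c * f x) = (\<lambda>x. c * T f x)) \<and>
     (\<exists>C. \<forall>f\<in>L2 M. L2norm M (T f) \<le> C * L2norm M f)"

definition op_norm :: "'a measure \<Rightarrow> (('a \<Rightarrow> complex) \<Rightarrow> ('a \<Rightarrow> complex)) \<Rightarrow> real" where
  "op_norm M T = Sup {L2norm M (T f) | f. f \<in> L2 M \<and> L2norm M f \<le> 1}"

definition mult_ind :: "'a set \<Rightarrow> ('a \<Rightarrow> complex) \<Rightarrow> ('a \<Rightarrow> complex)" where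
  "mult_ind A f = (\<lambda>x. indicator A x * f x)"

definition compact_op :: "'a measure \<Rightarrow> (('a \<Rightarrow> complex) \<Rightarrow> ('a \<Rightarrow> complex)) \<Rightarrow> bool" where
  "compact_op M T \<longleftrightarrow>
     (\<forall>s. (\<forall>n. s n \<in> L2 M \<and> L2norm M (s n) \<le> 1) \<longrightarrow>
        (\<exists>(r::nat \<Rightarrow> nat) g. strict_mono r \<and> g \<in> L2 M \<and>
           (\<lambda>n. L2norm M (\<lambda>x. T (s (r n)) x - g x)) \<longlonglongrightarrow> 0))"

definition controlled_op :: "'a::metric_space measure \<Rightarrow> (('a \<Rightarrow> complex) \<Rightarrow> ('a \<Rightarrow> complex)) \<Rightarrow> bool" where
  "controlled_op M T \<longleftrightarrow>
     (\<exists>r>0. \<forall>F G. closed F \<longrightarrow> closed G \<longrightarrow> setdist F G > r \<longrightarrow>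
        (\<forall>f\<in>L2 M. AE x in M. mult_ind F (T (mult_ind G f)) x = 0))"

definition locally_compact_op :: "'a::metric_space measure \<Rightarrow> (('a \<Rightarrow> complex) \<Rightarrow> ('a \<Rightarrow> complex)) \<Rightarrow> bool" where
  "locally_compact_op M T \<longleftrightarrow>
     (\<forall>K. compact K \<longrightarrow> compact_op M (\<lambda>f. mult_ind K (T f)) \<and> compact_op M (\<lambda>f. T (mult_ind K f)))"

end

theory Submission
  imports Defs "HOL-Library.Diagonal_Subsequence"
begin

text \<open>Let \<open>s\<^sub>n\<close> be a sequence in the unit ball. Local compactness makes every truncation
  \<open>1\<^bsub>B(z,j)\<^esub> T\<close> compact, so a diagonal subsequence makes \<open>1\<^bsub>B(z,j)\<^esub> T s\<^sub>n\<close> converge in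
  \<open>L\<^sup>2\<close> for every \<open>j\<close>. By uniqueness of \<open>L\<^sup>2\<close> limits these local limits are consistent and
  glue to one \<open>g \<in> L\<^sup>2\<close>.

  Local convergence becomes global convergence once \<open>T\<close> is uniformly small far away. Cover the
  complement of a large ball by unit balls around a 1-separated net. If \<open>T\<close> has propagation
  at most \<open>r\<close>, then \<open>1\<^bsub>B(c,1)\<^esub> T f\<close> only depends on \<open>f\<close> on \<open>B(c,r+2)\<close>, and the decay hypothesis
  makes it small compared with \<open>f\<close> there. The balls \<open>B(c,r+2)\<close> overlap at most \<open>N\<close> times,
  because the disjoint balls \<open>B(c,1/2)\<close> have measure bounded below and fit into a ball of
  uniformly bounded measure. Summing gives \<open>\<parallel>1\<^bsub>X - B(z,R)\<^esub> T f\<parallel>\<^sup>2 \<le> \<delta> \<parallel>f\<parallel>\<^sup>2\<close>.\<close>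

section \<open>Squared \<open>L\<^sup>2\<close> norms\<close>

text \<open>For \<open>f \<notin> L2\<close> the Bochner integral in \<open>L2norm\<close> gives the junk value \<open>0\<close>; the
  nonnegative integral below is \<open>\<infinity>\<close> instead, so its finiteness characterises \<open>L2\<close>.\<close>

definition L2sq :: "'a measure \<Rightarrow> ('a \<Rightarrow> complex) \<Rightarrow> ennreal" where
  "L2sq M f = (\<integral>\<^sup>+x. ennreal ((cmod (f x))\<^sup>2) \<partial>M)"

lemma measurable_mult_ind [measurable]:
  assumes [measurable]: "A \<in> sets M" "f \<in> borel_measurable M"
  shows "mult_ind A f \<in> borel_measurable M"
  unfolding mult_ind_def by measurable

lemma mult_ind_mult_ind: "mult_ind A (mult_ind B f) = mult_ind (A \<inter> B) f"
  by (simp add: mult_ind_def indicator_inter_arith mult.assoc)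

lemma L2_iff: "f \<in> L2 M \<longleftrightarrow> f \<in> borel_measurable M \<and> L2sq M f < \<infinity>"
proof (cases "f \<in> borel_measurable M")
  case [measurable]: True
  have "(\<lambda>x. (cmod (f x))\<^sup>2) \<in> borel_measurable M" by measurable
  then show ?thesis by (simp add: L2_def L2sq_def integrable_iff_bounded)
qed (simp add: L2_def)

lemma L2_measurable: "f \<in> L2 M \<Longrightarrow> f \<in> borel_measurable M"
  by (simp add: L2_iff)

lemma L2norm_nonneg: "L2norm M f \<ge> 0"
  by (simp add: L2norm_def)

lemma L2norm_eq_L2sq: "f \<in> borel_measurable M \<Longrightarrow> L2norm M f = sqrt (enn2real (L2sq M f))"
  unfolding L2norm_def L2sq_def by (subst integral_eq_nn_integral) auto

lemma L2sq_eq_L2norm: "f \<in> L2 M \<Longrightarrow> L2sq M f = ennreal ((L2norm M f)\<^sup>2)"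
  by (auto simp: L2_iff L2norm_eq_L2sq ennreal_enn2real_if)

lemma L2sq_mono: "(\<And>x. cmod (f x) \<le> cmod (g x)) \<Longrightarrow> L2sq M f \<le> L2sq M g"
  unfolding L2sq_def by (intro nn_integral_mono) (auto intro!: power_mono)

lemma L2sq_mult_ind_le: "L2sq M (mult_ind A f) \<le> L2sq M f"
  by (rule L2sq_mono) (auto simp: mult_ind_def indicator_def)

lemma L2sq_mult_ind_mono: "A \<subseteq> B \<Longrightarrow> L2sq M (mult_ind A f) \<le> L2sq M (mult_ind B f)"
  by (rule L2sq_mono) (auto simp: mult_ind_def split: split_indicator)

lemma L2sq_mult_ind:
  "L2sq M (mult_ind A f) = (\<integral>\<^sup>+x. indicator A x * ennreal ((cmod (f x))\<^sup>2) \<partial>M)"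
  unfolding L2sq_def mult_ind_def by (rule nn_integral_cong) (auto simp: indicator_def)

lemma L2sq_cong_AE: "AE x in M. f x = g x \<Longrightarrow> L2sq M f = L2sq M g"
  unfolding L2sq_def by (rule nn_integral_cong_AE) auto

lemma L2sq_commute: "L2sq M (\<lambda>x. f x - g x) = L2sq M (\<lambda>x. g x - f x)"
  unfolding L2sq_def by (simp add: norm_minus_commute)

lemma L2sq_scale:
  "f \<in> borel_measurable M \<Longrightarrow> L2sq M (\<lambda>x. c * f x) = ennreal ((cmod c)\<^sup>2) * L2sq M f"
  unfolding L2sq_def
  by (subst nn_integral_cmult[symmetric]) (auto simp: norm_mult power_mult_distrib ennreal_mult)

lemma L2sq_add_le: "L2sq M (\<lambda>x. f x + g x) \<le> 2 * L2sq M f + 2 * L2sq M g"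
  and L2sq_diff_le: "L2sq M (\<lambda>x. f x - g x) \<le> 2 * L2sq M f + 2 * L2sq M g"
  if [measurable]: "f \<in> borel_measurable M" "g \<in> borel_measurable M"
proof -
  have sq: "(cmod c)\<^sup>2 \<le> 2 * (cmod a)\<^sup>2 + 2 * (cmod b)\<^sup>2" if "cmod c \<le> cmod a + cmod b" for a b c
  proof -
    have "(cmod c)\<^sup>2 \<le> (cmod a + cmod b)\<^sup>2" using that by (intro power_mono) auto
    also have "\<dots> \<le> 2 * (cmod a)\<^sup>2 + 2 * (cmod b)\<^sup>2"
      using sum_squares_ge_zero[of "cmod a - cmod b" 0] by (simp add: power2_eq_square algebra_simps)
    finally show ?thesis .
  qed
  have sum: "2 * L2sq M f + 2 * L2sq M g
      = (\<integral>\<^sup>+x. ennreal (2 * (cmod (f x))\<^sup>2 + 2 * (cmod (g x))\<^sup>2) \<partial>M)"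
    unfolding L2sq_def
    by (subst nn_integral_add[symmetric] nn_integral_cmult[symmetric], auto simp: ennreal_plus ennreal_mult)+
  show "L2sq M (\<lambda>x. f x + g x) \<le> 2 * L2sq M f + 2 * L2sq M g"
    unfolding sum unfolding L2sq_def by (intro nn_integral_mono ennreal_leI sq norm_triangle_ineq)
  show "L2sq M (\<lambda>x. f x - g x) \<le> 2 * L2sq M f + 2 * L2sq M g"
    unfolding sum unfolding L2sq_def by (intro nn_integral_mono ennreal_leI sq norm_triangle_ineq4)
qed

lemma L2sq_split:
  assumes [measurable]: "A \<in> sets M" "h \<in> borel_measurable M"
  shows "L2sq M h = L2sq M (mult_ind A h) + L2sq M (mult_ind (space M - A) h)"
proof -
  have "L2sq M (mult_ind A h) + L2sq M (mult_ind (space M - A) h) =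
     (\<integral>\<^sup>+x. indicator A x * ennreal ((cmod (h x))\<^sup>2)
            + indicator (space M - A) x * ennreal ((cmod (h x))\<^sup>2) \<partial>M)"
    by (simp add: L2sq_mult_ind nn_integral_add)
  also have "\<dots> = L2sq M h"
    unfolding L2sq_def by (rule nn_integral_cong) (auto simp: indicator_def)
  finally show ?thesis by simp
qed

lemma AE_zero_if_L2sq_eq_0:
  assumes [measurable]: "u \<in> borel_measurable M" and "L2sq M u = 0"
  shows "AE x in M. u x = 0"
proof -
  have "AE x in M. ennreal ((cmod (u x))\<^sup>2) = 0"
    using assms(2) unfolding L2sq_def by (subst nn_integral_0_iff_AE[symmetric]) simp_all
  then show ?thesis by eventually_elim simp
qed

lemma L2_mult_ind: "A \<in> sets M \<Longrightarrow> f \<in> L2 M \<Longrightarrow> mult_ind A f \<in> L2 M"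
  using L2sq_mult_ind_le[of M A f] by (auto simp: L2_iff)

lemma L2_diff:
  assumes "f \<in> L2 M" "g \<in> L2 M"
  shows "(\<lambda>x. f x - g x) \<in> L2 M"
proof -
  have [measurable]: "f \<in> borel_measurable M" "g \<in> borel_measurable M"
    and fin: "2 * L2sq M f + 2 * L2sq M g < \<infinity>"
    using assms by (auto simp: L2_iff ennreal_mult_less_top)
  show ?thesis using le_less_trans[OF L2sq_diff_le fin] by (simp add: L2_iff)
qed

lemma L2_scale: "f \<in> L2 M \<Longrightarrow> (\<lambda>x. c * f x) \<in> L2 M"
  by (auto simp: L2_iff L2sq_scale ennreal_mult_less_top)

lemma L2norm_scale:
  "f \<in> borel_measurable M \<Longrightarrow> L2norm M (\<lambda>x. c * f x) = cmod c * L2norm M f"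
  by (simp add: L2norm_eq_L2sq L2sq_scale enn2real_mult real_sqrt_mult)

lemma L2norm_mono:
  "f \<in> borel_measurable M \<Longrightarrow> g \<in> L2 M \<Longrightarrow> L2sq M f \<le> L2sq M g \<Longrightarrow> L2norm M f \<le> L2norm M g"
  by (auto simp: L2norm_eq_L2sq L2_iff intro!: real_sqrt_le_mono enn2real_mono)

lemma L2sq_le_of_L2norm_le: "f \<in> L2 M \<Longrightarrow> L2norm M f \<le> c \<Longrightarrow> L2sq M f \<le> ennreal (c\<^sup>2)"
  by (simp add: L2sq_eq_L2norm L2norm_nonneg ennreal_leI power_mono)

lemma L2sq_le_mult_if_L2norm_le_mult:
  assumes "f \<in> L2 M" "g \<in> L2 M" "L2norm M f \<le> c * L2norm M g" "c \<ge> 0"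
  shows "L2sq M f \<le> ennreal (c\<^sup>2) * L2sq M g"
proof -
  have "(L2norm M f)\<^sup>2 \<le> (c * L2norm M g)\<^sup>2"
    using assms by (intro power_mono) (auto simp: L2norm_nonneg)
  then show ?thesis
    using assms by (simp add: L2sq_eq_L2norm power_mult_distrib ennreal_mult[symmetric])
qed

lemma L2norm_tendsto_0_iff:
  assumes "\<And>n. h n \<in> L2 M"
  shows "(\<lambda>n. L2norm M (h n)) \<longlonglongrightarrow> 0 \<longleftrightarrow> (\<lambda>n. L2sq M (h n)) \<longlonglongrightarrow> 0"
proof
  assume "(\<lambda>n. L2norm M (h n)) \<longlonglongrightarrow> 0"
  then have "(\<lambda>n. ennreal ((L2norm M (h n))\<^sup>2)) \<longlonglongrightarrow> ennreal (0\<^sup>2)"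
    by (intro tendsto_ennrealI tendsto_power)
  then show "(\<lambda>n. L2sq M (h n)) \<longlonglongrightarrow> 0" using assms by (simp add: L2sq_eq_L2norm)
next
  assume "(\<lambda>n. L2sq M (h n)) \<longlonglongrightarrow> 0"
  then have "(\<lambda>n. sqrt (enn2real (L2sq M (h n)))) \<longlonglongrightarrow> sqrt (enn2real 0)"
    by (intro tendsto_real_sqrt tendsto_enn2real) simp_all
  then show "(\<lambda>n. L2norm M (h n)) \<longlonglongrightarrow> 0" using assms by (simp add: L2norm_eq_L2sq L2_measurable)
qed

lemma le_twice_sum_of_tendsto:
  fixes a b :: "nat \<Rightarrow> ennreal"
  assumes "\<And>n. c \<le> 2 * a n + 2 * b n" "a \<longlonglongrightarrow> x" "b \<longlonglongrightarrow> y"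
  shows "c \<le> 2 * x + 2 * y"
proof (rule tendsto_lowerbound)
  show "(\<lambda>n. 2 * a n + 2 * b n) \<longlonglongrightarrow> 2 * x + 2 * y"
    using assms by (intro tendsto_add ennreal_tendsto_cmult) simp_all
qed (use assms in simp_all)

lemma L2_limit_unique:
  assumes [measurable]: "\<And>n. f n \<in> borel_measurable M" "a \<in> borel_measurable M" "b \<in> borel_measurable M"
    and "(\<lambda>n. L2sq M (\<lambda>x. f n x - a x)) \<longlonglongrightarrow> 0" "(\<lambda>n. L2sq M (\<lambda>x. f n x - b x)) \<longlonglongrightarrow> 0"
  shows "AE x in M. a x = b x"
proof -
  have "L2sq M (\<lambda>x. a x - b x) \<le> 2 * 0 + 2 * 0"
  proof (rule le_twice_sum_of_tendsto)
    fix n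
    have "(\<lambda>x. a x - b x) = (\<lambda>x. (a x - f n x) + (f n x - b x))" by simp
    then show "L2sq M (\<lambda>x. a x - b x)
        \<le> 2 * L2sq M (\<lambda>x. f n x - a x) + 2 * L2sq M (\<lambda>x. f n x - b x)"
      using L2sq_add_le[of "\<lambda>x. a x - f n x" M "\<lambda>x. f n x - b x"]
      by (simp add: L2sq_commute[of M a])
  qed fact+
  then have "AE x in M. a x - b x = 0" by (intro AE_zero_if_L2sq_eq_0) auto
  then show ?thesis by eventually_elim simp
qed

lemma L2sq_le_of_limit:
  assumes [measurable]: "\<And>n. f n \<in> borel_measurable M" "a \<in> borel_measurable M"
    and "(\<lambda>n. L2sq M (\<lambda>x. f n x - a x)) \<longlonglongrightarrow> 0" "\<And>n. L2sq M (f n) \<le> B"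
  shows "L2sq M a \<le> 2 * B"
proof -
  have "L2sq M a \<le> 2 * B + 2 * 0"
  proof (rule le_twice_sum_of_tendsto)
    fix n
    have "L2sq M a \<le> 2 * L2sq M (f n) + 2 * L2sq M (\<lambda>x. f n x - a x)"
      using L2sq_diff_le[of "f n" M "\<lambda>x. f n x - a x"] by simp
    also have "\<dots> \<le> 2 * B + 2 * L2sq M (\<lambda>x. f n x - a x)"
      using assms(4) by (intro add_right_mono mult_left_mono) simp_all
    finally show "L2sq M a \<le> 2 * B + 2 * L2sq M (\<lambda>x. f n x - a x)" .
  qed (use assms(3) in simp_all)
  then show ?thesis by simp
qed

lemma L2sq_tendsto_mult_ind:
  assumes "(\<lambda>n. L2sq M (\<lambda>x. f n x - a x)) \<longlonglongrightarrow> 0"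
  shows "(\<lambda>n. L2sq M (\<lambda>x. mult_ind A (f n) x - mult_ind A a x)) \<longlonglongrightarrow> 0"
proof (rule tendsto_sandwich[OF _ _ tendsto_const assms])
  show "\<forall>\<^sub>F n in sequentially. L2sq M (\<lambda>x. mult_ind A (f n) x - mult_ind A a x)
      \<le> L2sq M (\<lambda>x. f n x - a x)"
    by (intro always_eventually allI L2sq_mono)
      (auto simp: mult_ind_def indicator_def)
qed simp

section \<open>Bounded operators\<close>

lemma bounded_op_L2: "bounded_op M T \<Longrightarrow> f \<in> L2 M \<Longrightarrow> T f \<in> L2 M"
  and bounded_op_add:
    "bounded_op M T \<Longrightarrow> f \<in> L2 M \<Longrightarrow> g \<in> L2 M \<Longrightarrow> T (\<lambda>x. f x + g x) = (\<lambda>x. T f x + T g x)"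
  and bounded_op_scale: "bounded_op M T \<Longrightarrow> f \<in> L2 M \<Longrightarrow> T (\<lambda>x. c * f x) = (\<lambda>x. c * T f x)"
  by (auto simp: bounded_op_def)

lemma bounded_op_bound:
  assumes "bounded_op M T"
  obtains C where "C \<ge> 0" "\<And>f. f \<in> L2 M \<Longrightarrow> L2norm M (T f) \<le> C * L2norm M f"
proof -
  obtain C where C: "\<forall>f\<in>L2 M. L2norm M (T f) \<le> C * L2norm M f"
    using assms by (auto simp: bounded_op_def)
  have "L2norm M (T f) \<le> max C 0 * L2norm M f" if "f \<in> L2 M" for f
  proof -
    have "C * L2norm M f \<le> max C 0 * L2norm M f"
      by (intro mult_right_mono L2norm_nonneg) simp
    then show ?thesis using C that by fastforce
  qed
  then show ?thesis using that[of "max C 0"] by simp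
qed

lemma bounded_op_L2sq_bound:
  assumes "bounded_op M T"
  obtains B where "\<And>f. f \<in> L2 M \<Longrightarrow> L2norm M f \<le> 1 \<Longrightarrow> L2sq M (T f) \<le> ennreal B"
proof -
  obtain C where C: "C \<ge> 0" "\<And>f. f \<in> L2 M \<Longrightarrow> L2norm M (T f) \<le> C * L2norm M f"
    using bounded_op_bound[OF assms] by blast
  have "L2sq M (T f) \<le> ennreal (C\<^sup>2)" if "f \<in> L2 M" "L2norm M f \<le> 1" for f
  proof (rule L2sq_le_of_L2norm_le)
    show "T f \<in> L2 M" using assms that(1) by (rule bounded_op_L2)
    show "L2norm M (T f) \<le> C" using C(2)[OF that(1)] mult_left_le[OF that(2) C(1)] by linarith
  qed
  then show thesis using that by blast
qed

lemma bounded_op_mult_ind: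
  assumes T: "bounded_op M T" and A: "A \<in> sets M"
  shows "bounded_op M (\<lambda>f. mult_ind A (T f))"
proof -
  obtain C where C: "C \<ge> 0" "\<And>f. f \<in> L2 M \<Longrightarrow> L2norm M (T f) \<le> C * L2norm M f"
    using bounded_op_bound[OF T] by blast
  have "L2norm M (mult_ind A (T f)) \<le> C * L2norm M f" if "f \<in> L2 M" for f
    using that A T C(2)[OF that]
    by (meson L2norm_mono L2sq_mult_ind_le L2_measurable bounded_op_L2 measurable_mult_ind order_trans)
  moreover have "mult_ind A (T (\<lambda>x. f x + g x)) = (\<lambda>x. mult_ind A (T f) x + mult_ind A (T g) x)"
    if "f \<in> L2 M" "g \<in> L2 M" for f g
    using that T by (simp add: bounded_op_add mult_ind_def distrib_left)
  moreover have "mult_ind A (T (\<lambda>x. c * f x)) = (\<lambda>x. c * mult_ind A (T f) x)"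
    if "f \<in> L2 M" for f c
    using that T by (simp add: bounded_op_scale mult_ind_def mult.left_commute)
  ultimately show ?thesis
    using T A by (auto simp: bounded_op_def bounded_op_L2 L2_mult_ind)
qed

lemma L2norm_le_op_norm:
  assumes S: "bounded_op M S" and h: "h \<in> L2 M"
  shows "L2norm M (S h) \<le> op_norm M S * L2norm M h"
proof -
  obtain C where C: "C \<ge> 0" "\<And>f. f \<in> L2 M \<Longrightarrow> L2norm M (S f) \<le> C * L2norm M f"
    using bounded_op_bound[OF S] by blast
  define U where "U = {L2norm M (S f) | f. f \<in> L2 M \<and> L2norm M f \<le> 1}"
  have bdd: "bdd_above U"
  proof (rule bdd_aboveI)
    fix y assume "y \<in> U"
    then obtain f where "f \<in> L2 M" "L2norm M f \<le> 1" "y = L2norm M (S f)"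
      by (auto simp: U_def)
    then show "y \<le> C" using C by (metis mult_left_le order_trans)
  qed
  show ?thesis
  proof (cases "L2norm M h = 0")
    case True
    then show ?thesis using C(2)[OF h] L2norm_nonneg[of M "S h"] by simp
  next
    case False
    define t where "t = L2norm M h"
    have t: "t > 0" using False L2norm_nonneg[of M h] by (simp add: t_def)
    define h' where "h' = (\<lambda>x. complex_of_real (1/t) * h x)"
    have h': "h' \<in> L2 M" "L2norm M h' = 1"
      unfolding h'_def using t h
      by (simp_all only: L2_scale L2norm_scale L2_measurable) (simp add: t_def norm_divide)
    have "L2norm M (S h') = L2norm M (S h) / t"
      unfolding h'_def using t S h
      by (simp only: bounded_op_scale L2norm_scale L2_measurable bounded_op_L2) (simp add: norm_divide)
    moreover have "L2norm M (S h') \<le> Sup U"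
      using h' by (intro cSup_upper bdd) (auto simp: U_def)
    ultimately show ?thesis using t by (simp add: op_norm_def U_def t_def field_simps)
  qed
qed

section \<open>From local to global convergence\<close>

lemma compact_ops_common_subseq:
  fixes s :: "nat \<Rightarrow> 'a \<Rightarrow> complex"
  assumes S: "\<And>j::nat. compact_op M (S j)" and s: "\<And>n. s n \<in> L2 M \<and> L2norm M (s n) \<le> 1"
  obtains \<sigma> where "strict_mono \<sigma>"
    "\<And>j. \<exists>g\<in>L2 M. (\<lambda>n. L2norm M (\<lambda>x. S j (s (\<sigma> n)) x - g x)) \<longlonglongrightarrow> 0"
proof -
  define P where "P j r \<longleftrightarrow> (\<exists>g\<in>L2 M. (\<lambda>n. L2norm M (\<lambda>x. S j (s (r n)) x - g x)) \<longlonglongrightarrow> 0)"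
    for j and r :: "nat \<Rightarrow> nat"
  interpret subseqs P
  proof
    fix j and r :: "nat \<Rightarrow> nat"
    have "\<forall>n. (s \<circ> r) n \<in> L2 M \<and> L2norm M ((s \<circ> r) n) \<le> 1" using s by simp
    then show "\<exists>r'. strict_mono r' \<and> P j (r \<circ> r')"
      using S[of j] unfolding compact_op_def P_def o_def
      by (auto dest!: spec[of _ "\<lambda>n. s (r n)"])
  qed
  have diag: "P j (diagseq \<circ> (+) (Suc j))" for j
  proof (rule diagseq_holds)
    fix q r :: "nat \<Rightarrow> nat" and j assume "strict_mono q" "P j r"
    then show "P j (r \<circ> q)"
      unfolding P_def using LIMSEQ_subseq_LIMSEQ[of _ 0 q] by (auto simp: o_def)
  qed
  have "\<exists>g\<in>L2 M. (\<lambda>n. L2norm M (\<lambda>x. S j (s (diagseq n)) x - g x)) \<longlonglongrightarrow> 0" for j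
  proof -
    define d where "d g n = L2norm M (\<lambda>x. S j (s (diagseq n)) x - g x)" for g n
    obtain g where "g \<in> L2 M" "(\<lambda>n. d g (Suc j + n)) \<longlonglongrightarrow> 0"
      using diag[of j] unfolding P_def d_def o_def by blast
    then have "g \<in> L2 M" "d g \<longlonglongrightarrow> 0"
      using LIMSEQ_offset[of "d g" "Suc j" 0] by (simp_all add: add.commute)
    then show ?thesis unfolding d_def by blast
  qed
  then show thesis using that subseq_diagseq by blast
qed

lemma glue_consistent:
  fixes L :: "nat \<Rightarrow> 'a set"
  assumes L: "\<And>j. L j \<in> sets M" "space M \<subseteq> (\<Union>j. L j)"
    and G: "\<And>j. G j \<in> borel_measurable M"
      "\<And>i j. i \<le> j \<Longrightarrow> AE x in M. indicator (L i) x * G j x = G i x"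
  obtains g :: "'a \<Rightarrow> 'b::real_normed_algebra_1" where "g \<in> borel_measurable M"
    "\<And>j. AE x in M. indicator (L j) x * g x = G j x"
proof -
  define k where "k x = (LEAST j. x \<in> L j)" for x
  have [measurable]: "L j \<in> sets M" for j by (rule L(1))
  have [measurable]: "k \<in> measurable M (count_space UNIV)"
    unfolding k_def by measurable
  have k: "x \<in> L (k x)" "x \<in> L j \<Longrightarrow> k x \<le> j" if "x \<in> space M" for x j
    using L(2) that unfolding k_def by (auto intro: LeastI Least_le)
  define g where "g x = G (k x) x" for x
  have "g \<in> borel_measurable M"
    unfolding g_def by (rule measurable_compose_countable[OF G(1)]) measurable
  moreover have "AE x in M. indicator (L j) x * g x = G j x" for j
  proof -
    have "AE x in M. \<forall>i j. i \<le> j \<longrightarrow> indicator (L i) x * G j x = G i x"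
      using G(2) by (auto simp: AE_all_countable)
    then show ?thesis
    proof (rule AE_mp, intro AE_I2 impI)
      fix x assume x: "x \<in> space M" and cons: "\<forall>i j. i \<le> j \<longrightarrow> indicator (L i) x * G j x = G i x"
      show "indicator (L j) x * g x = G j x"
      proof (cases "x \<in> L j")
        case True
        then show ?thesis using cons[rule_format, OF k(2)[OF x True]] k(1)[OF x] by (simp add: g_def)
      next
        case False
        then show ?thesis using cons[rule_format, of j j] by simp
      qed
    qed
  qed
  ultimately show thesis using that by blast
qed

lemma L2sq_eq_SUP_mult_ind:
  assumes L: "\<And>j. L j \<in> sets M" "incseq L" "space M \<subseteq> (\<Union>j. L j)"
    and [measurable]: "g \<in> borel_measurable M"
  shows "L2sq M g = (SUP j. L2sq M (mult_ind (L j) g))"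
proof -
  have "L2sq M g = (\<integral>\<^sup>+x. (SUP j. indicator (L j) x * ennreal ((cmod (g x))\<^sup>2)) \<partial>M)"
    unfolding L2sq_def
  proof (rule nn_integral_cong, rule antisym)
    fix x assume "x \<in> space M"
    then obtain j where "x \<in> L j" using L(3) by blast
    then show "ennreal ((cmod (g x))\<^sup>2) \<le> (SUP j. indicator (L j) x * ennreal ((cmod (g x))\<^sup>2))"
      by (intro SUP_upper2[of j]) auto
  qed (auto intro!: SUP_least simp: indicator_def)
  also have "\<dots> = (SUP j. \<integral>\<^sup>+x. indicator (L j) x * ennreal ((cmod (g x))\<^sup>2) \<partial>M)"
  proof (rule nn_integral_monotone_convergence_SUP)
    show "incseq (\<lambda>j x. indicator (L j) x * ennreal ((cmod (g x))\<^sup>2))"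
      using L(2) by (intro incseq_SucI le_funI mult_right_mono) (auto simp: incseq_Suc_iff split: split_indicator)
  qed (use L(1) in measurable)
  finally show ?thesis by (simp add: L2sq_mult_ind)
qed

lemma L2sq_tail_tendsto_0:
  assumes L: "\<And>j. L j \<in> sets M" "incseq L" "space M \<subseteq> (\<Union>j. L j)" and g: "g \<in> L2 M"
  shows "(\<lambda>j. L2sq M (mult_ind (space M - L j) g)) \<longlonglongrightarrow> 0"
proof -
  have [measurable]: "g \<in> borel_measurable M" and fin: "L2sq M g \<noteq> \<infinity>"
    using g by (simp_all add: L2_iff top.not_eq_extremum)
  have "incseq (\<lambda>j. L2sq M (mult_ind (L j) g))"
    using L(2) by (intro incseq_SucI L2sq_mono) (auto simp: incseq_Suc_iff mult_ind_def split: split_indicator)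
  then have "(\<lambda>j. L2sq M (mult_ind (L j) g)) \<longlonglongrightarrow> L2sq M g"
    unfolding L2sq_eq_SUP_mult_ind[OF L \<open>g \<in> borel_measurable M\<close>] by (rule LIMSEQ_SUP)
  then have "(\<lambda>j. L2sq M g - L2sq M (mult_ind (L j) g)) \<longlonglongrightarrow> L2sq M g - L2sq M g"
    using fin by (intro tendsto_diff_ennreal tendsto_const) auto
  moreover have "L2sq M g - L2sq M (mult_ind (L j) g) = L2sq M (mult_ind (space M - L j) g)" for j
    using L2sq_split[of "L j" M g] L2sq_mult_ind_le[of M "L j" g] L(1) fin
    by (simp add: ennreal_add_diff_cancel_left top_unique)
  ultimately show ?thesis using fin by simp
qed

lemma glue_local_L2_limits:
  assumes L: "\<And>j. L j \<in> sets M" "incseq L" "space M \<subseteq> (\<Union>j. L j)"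
    and h: "\<And>n. h n \<in> borel_measurable M" "\<And>n. L2sq M (h n) \<le> ennreal B"
    and G: "\<And>j. G j \<in> borel_measurable M"
      "\<And>j. (\<lambda>n. L2sq M (\<lambda>x. mult_ind (L j) (h n) x - G j x)) \<longlonglongrightarrow> 0"
  obtains g where "g \<in> L2 M" "\<And>j. AE x in M. mult_ind (L j) g x = G j x"
proof -
  have [measurable]: "L j \<in> sets M" for j by (rule L(1))
  have "AE x in M. mult_ind (L i) (G j) x = G i x" if "i \<le> j" for i j
  proof (rule L2_limit_unique)
    have "mult_ind (L i) (mult_ind (L j) f) = mult_ind (L i) f" for f
      using monoD[OF L(2) that] by (auto simp: mult_ind_def fun_eq_iff split: split_indicator)
    then show "(\<lambda>n. L2sq M (\<lambda>x. mult_ind (L i) (h n) x - mult_ind (L i) (G j) x)) \<longlonglongrightarrow> 0"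
      using L2sq_tendsto_mult_ind[OF G(2)[of j], of "L i"] by simp
  qed (use h G in measurable)
  then have consistent: "AE x in M. indicator (L i) x * G j x = G i x" if "i \<le> j" for i j
    using that by (simp add: mult_ind_def)
  obtain g where [measurable]: "g \<in> borel_measurable M"
    and g: "\<And>j. AE x in M. indicator (L j) x * g x = G j x"
    using glue_consistent[of L M G, OF L(1,3) G(1) consistent] by blast
  then have g: "AE x in M. mult_ind (L j) g x = G j x" for j by (simp add: mult_ind_def)
  have "L2sq M (mult_ind (L j) g) = L2sq M (G j)" for j
    using g[of j] by (rule L2sq_cong_AE)
  moreover have "L2sq M (G j) \<le> 2 * ennreal B" for j
    using G(2)[of j] h(2) h(1) G(1) by (intro L2sq_le_of_limit) (auto intro: order_trans[OF L2sq_mult_ind_le])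
  ultimately have "L2sq M g \<le> 2 * ennreal B"
    by (simp add: L2sq_eq_SUP_mult_ind[OF L] SUP_least)
  then have "g \<in> L2 M"
    by (simp add: L2_iff ennreal_mult_less_top le_less_trans)
  with g show thesis using that by blast
qed

lemma L2sq_diff_split_le:
  assumes [measurable]: "A \<in> sets M" "f \<in> borel_measurable M" "g \<in> borel_measurable M"
  shows "L2sq M (\<lambda>x. f x - g x) \<le> L2sq M (\<lambda>x. mult_ind A f x - mult_ind A g x)
    + (2 * L2sq M (mult_ind (space M - A) f) + 2 * L2sq M (mult_ind (space M - A) g))"
proof -
  have "mult_ind B (\<lambda>x. f x - g x) = (\<lambda>x. mult_ind B f x - mult_ind B g x)" for B
    by (simp add: mult_ind_def right_diff_distrib)
  then show ?thesis
    using L2sq_split[of A M "\<lambda>x. f x - g x"] L2sq_diff_le[of "mult_ind (space M - A) f" M]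
    by (simp add: add_left_mono)
qed

lemma L2sq_tendsto_0_if_local_and_tight:
  assumes L: "\<And>j. L j \<in> sets M" "incseq L"
    and [measurable]: "\<And>n. h n \<in> borel_measurable M" "g \<in> borel_measurable M"
    and local: "\<And>j. (\<lambda>n. L2sq M (\<lambda>x. mult_ind (L j) (h n) x - mult_ind (L j) g x)) \<longlonglongrightarrow> 0"
    and tight: "\<And>e. e > 0 \<Longrightarrow> \<exists>j. \<forall>n. L2sq M (mult_ind (space M - L j) (h n)) \<le> ennreal e"
    and tail: "(\<lambda>j. L2sq M (mult_ind (space M - L j) g)) \<longlonglongrightarrow> 0"
  shows "(\<lambda>n. L2sq M (\<lambda>x. h n x - g x)) \<longlonglongrightarrow> 0"
proof (rule tendsto_zero_ennreal)
  fix e :: real assume "0 < e"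
  define \<epsilon> where "\<epsilon> = ennreal (e/8)"
  have "\<epsilon> > 0" using \<open>0 < e\<close> by (simp add: \<epsilon>_def)
  have small: "2 * \<epsilon> + (2 * \<epsilon> + 2 * \<epsilon>) < ennreal e"
  proof -
    have "2 * x + (2 * x + 2 * x) = 6 * (x::ennreal)" for x
      by (simp only: distrib_right[symmetric]) simp
    also have "6 * \<epsilon> = ennreal (6 * (e / 8))"
      unfolding \<epsilon>_def by (subst ennreal_mult') simp_all
    also have "\<dots> < ennreal e" using \<open>0 < e\<close> by (intro ennreal_lessI) simp_all
    finally show ?thesis .
  qed
  obtain j1 where j1: "\<And>n. L2sq M (mult_ind (space M - L j1) (h n)) \<le> \<epsilon>"
    using tight[of "e/8"] \<open>0 < e\<close> by (auto simp: \<epsilon>_def)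
  obtain j2 where j2: "\<And>j. j \<ge> j2 \<Longrightarrow> L2sq M (mult_ind (space M - L j) g) < \<epsilon>"
    using order_tendstoD(2)[OF tail \<open>\<epsilon> > 0\<close>] by (auto simp: eventually_sequentially)
  define j where "j = max j1 j2"
  have "space M - L j \<subseteq> space M - L j1" using monoD[OF L(2), of j1 j] by (auto simp: j_def)
  then have tail_h: "L2sq M (mult_ind (space M - L j) (h n)) \<le> \<epsilon>" for n
    using j1[of n] by (blast intro: order_trans[OF L2sq_mult_ind_mono])
  have tail_g: "L2sq M (mult_ind (space M - L j) g) \<le> \<epsilon>"
    using j2[of j] by (simp add: j_def)
  have "\<forall>\<^sub>F n in sequentially. L2sq M (\<lambda>x. mult_ind (L j) (h n) x - mult_ind (L j) g x) < 2 * \<epsilon>"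
    using \<open>\<epsilon> > 0\<close> by (intro order_tendstoD(2)[OF local]) (simp add: ennreal_zero_less_mult_iff)
  then show "\<forall>\<^sub>F n in sequentially. L2sq M (\<lambda>x. h n x - g x) < ennreal e"
  proof eventually_elim
    case (elim n)
    have "L2sq M (\<lambda>x. h n x - g x) \<le> L2sq M (\<lambda>x. mult_ind (L j) (h n) x - mult_ind (L j) g x)
        + (2 * L2sq M (mult_ind (space M - L j) (h n)) + 2 * L2sq M (mult_ind (space M - L j) g))"
      using L(1) by (intro L2sq_diff_split_le) simp_all
    also have "\<dots> \<le> 2 * \<epsilon> + (2 * \<epsilon> + 2 * \<epsilon>)"
      using elim tail_h[of n] tail_g by (intro add_mono mult_left_mono) simp_all
    finally have "L2sq M (\<lambda>x. h n x - g x) \<le> 2 * \<epsilon> + (2 * \<epsilon> + 2 * \<epsilon>)" .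
    then show ?case using small by (rule le_less_trans)
  qed
qed

lemma L2_convergent_if_locally_convergent_and_tight:
  fixes h :: "nat \<Rightarrow> 'a \<Rightarrow> complex"
  assumes L: "\<And>j. L j \<in> sets M" "incseq L" "space M \<subseteq> (\<Union>j. L j)"
    and h: "\<And>n. h n \<in> L2 M" "\<And>n. L2sq M (h n) \<le> ennreal B"
    and local: "\<And>j. \<exists>G\<in>L2 M. (\<lambda>n. L2norm M (\<lambda>x. mult_ind (L j) (h n) x - G x)) \<longlonglongrightarrow> 0"
    and tight: "\<And>e. e > 0 \<Longrightarrow> \<exists>j. \<forall>n. L2sq M (mult_ind (space M - L j) (h n)) \<le> ennreal e"
  shows "\<exists>g\<in>L2 M. (\<lambda>n. L2norm M (\<lambda>x. h n x - g x)) \<longlonglongrightarrow> 0"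
proof -
  have [measurable]: "L j \<in> sets M" "h n \<in> borel_measurable M" for j n
    using L(1) h(1) by (simp_all add: L2_measurable)
  have "\<exists>G\<in>L2 M. (\<lambda>n. L2sq M (\<lambda>x. mult_ind (L j) (h n) x - G x)) \<longlonglongrightarrow> 0" for j
  proof -
    obtain G where G: "G \<in> L2 M" "(\<lambda>n. L2norm M (\<lambda>x. mult_ind (L j) (h n) x - G x)) \<longlonglongrightarrow> 0"
      using local by blast
    have "mult_ind (L j) (h n) \<in> L2 M" for n using L(1) h(1) by (rule L2_mult_ind)
    then show ?thesis
      using G L2norm_tendsto_0_iff[of "\<lambda>n x. mult_ind (L j) (h n) x - G x" M] by (blast intro: L2_diff)
  qed
  then obtain G where G_L2: "\<And>j. G j \<in> L2 M"
    and G_lim: "\<And>j. (\<lambda>n. L2sq M (\<lambda>x. mult_ind (L j) (h n) x - G j x)) \<longlonglongrightarrow> 0"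
    by metis
  obtain g where g: "g \<in> L2 M" "\<And>j. AE x in M. mult_ind (L j) g x = G j x"
    using glue_local_L2_limits[of L M h B G, OF L L2_measurable[OF h(1)] h(2) L2_measurable[OF G_L2] G_lim]
    by blast
  have "(\<lambda>n. L2sq M (\<lambda>x. mult_ind (L j) (h n) x - mult_ind (L j) g x)) \<longlonglongrightarrow> 0" for j
  proof -
    have "L2sq M (\<lambda>x. mult_ind (L j) (h n) x - mult_ind (L j) g x)
        = L2sq M (\<lambda>x. mult_ind (L j) (h n) x - G j x)" for n
      using g(2)[of j] by (intro L2sq_cong_AE) auto
    then show ?thesis using G_lim[of j] by simp
  qed
  then have "(\<lambda>n. L2sq M (\<lambda>x. h n x - g x)) \<longlonglongrightarrow> 0"
    using L2sq_tendsto_0_if_local_and_tight[OF L(1,2) _ _ _ tight L2sq_tail_tendsto_0[OF L g(1)]] g(1)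
    by (simp add: L2_measurable)
  then show ?thesis
    using g(1) L2norm_tendsto_0_iff[of "\<lambda>n x. h n x - g x" M] h(1) by (blast intro: L2_diff)
qed

section \<open>Separated nets\<close>

definition separated :: "real \<Rightarrow> 'a::metric_space set \<Rightarrow> bool" where
  "separated \<delta> F \<longleftrightarrow> (\<forall>a\<in>F. \<forall>b\<in>F. a \<noteq> b \<longrightarrow> \<delta> < dist a b)"

lemma separated_subset: "separated \<delta> F \<Longrightarrow> G \<subseteq> F \<Longrightarrow> separated \<delta> G"
  by (auto simp: separated_def)

lemma card_separated_in_compact_bounded:
  assumes "compact C" "\<delta> > 0"
  obtains N where "\<And>F. F \<subseteq> C \<Longrightarrow> separated \<delta> F \<Longrightarrow> finite F \<and> card F \<le> N"
proof -
  obtain D where D: "finite D" "C \<subseteq> (\<Union>d\<in>D. ball d (\<delta>/2))"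
    using assms by (auto simp: compact_eq_totally_bounded dest!: spec[of _ "\<delta>/2"])
  have "finite F \<and> card F \<le> card D" if F: "F \<subseteq> C" "separated \<delta> F" for F
  proof -
    obtain \<phi> where \<phi>: "\<And>a. a \<in> F \<Longrightarrow> \<phi> a \<in> D \<and> dist (\<phi> a) a < \<delta>/2"
      using D(2) F(1) by (simp add: subset_eq) metis
    have "inj_on \<phi> F"
    proof (rule inj_onI, rule ccontr)
      fix a b assume ab: "a \<in> F" "b \<in> F" "\<phi> a = \<phi> b" "a \<noteq> b"
      then have "dist a b < \<delta>"
        using \<phi>[OF ab(1)] \<phi>[OF ab(2)] dist_triangle2[of a b "\<phi> a"] by (simp add: dist_commute)
      then show False using F(2) ab unfolding separated_def by (meson less_asym)
    qed
    moreover have "\<phi> ` F \<subseteq> D" using \<phi> by auto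
    ultimately show ?thesis
      using D(1) by (metis card_image card_mono finite_imageD finite_subset)
  qed
  then show thesis using that by blast
qed

lemma compact_separated_net:
  assumes "compact C" "\<delta> > 0"
  obtains F where "finite F" "F \<subseteq> C" "separated \<delta> F" "C \<subseteq> (\<Union>c\<in>F. cball c \<delta>)"
proof -
  obtain N where N: "\<And>F. F \<subseteq> C \<Longrightarrow> separated \<delta> F \<Longrightarrow> finite F \<and> card F \<le> N"
    using card_separated_in_compact_bounded[OF assms] by blast
  define P where "P F \<longleftrightarrow> F \<subseteq> C \<and> separated \<delta> F" for F
  obtain F where F: "P F" "\<And>G. P G \<Longrightarrow> card G \<le> card F"
    using ex_has_greatest_nat[of P "{}" card "Suc N"] N by (force simp: P_def separated_def)
  have fin: "finite F" using F(1) N by (auto simp: P_def)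
  have "C \<subseteq> (\<Union>c\<in>F. cball c \<delta>)"
  proof
    fix y assume y: "y \<in> C"
    show "y \<in> (\<Union>c\<in>F. cball c \<delta>)"
    proof (rule ccontr)
      assume "y \<notin> (\<Union>c\<in>F. cball c \<delta>)"
      then have far: "\<And>c. c \<in> F \<Longrightarrow> \<delta> < dist c y" by (auto simp: not_le)
      with \<open>\<delta> > 0\<close> have "y \<notin> F" by force
      have "P (insert y F)"
        using F(1) y far by (auto simp: P_def separated_def dist_commute)
      then have "card (insert y F) \<le> card F" by (rule F(2))
      then show False using fin \<open>y \<notin> F\<close> by simp
    qed
  qed
  then show thesis using that fin F(1) by (auto simp: P_def)
qed

lemma card_separated_in_ball_le:
  fixes \<mu> :: "'a::metric_space measure" and F :: "'a set"
  assumes borel: "sets \<mu> = sets borel"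
    and F: "finite F" "separated 1 F" "F \<subseteq> ball y \<rho>"
  shows "of_nat (card F) * (INF x. emeasure \<mu> (cball x (1/2))) \<le> (SUP x. emeasure \<mu> (cball x (\<rho> + 1/2)))"
proof -
  have "disjoint_family_on (\<lambda>c. cball c (1/2)) F"
    unfolding disjoint_family_on_def
  proof (intro ballI impI, rule ccontr)
    fix a b assume ab: "a \<in> F" "b \<in> F" "a \<noteq> b" "cball a (1/2) \<inter> cball b (1/2) \<noteq> {}"
    then obtain x where "dist a x \<le> 1/2" "dist b x \<le> 1/2" by auto
    then have "dist a b \<le> 1" using dist_triangle2[of a b x] by linarith
    then show False using F(2) ab by (force simp: separated_def)
  qed
  then have disjoint: "(\<Sum>c\<in>F. emeasure \<mu> (cball c (1/2))) = emeasure \<mu> (\<Union>c\<in>F. cball c (1/2))"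
    using F(1) by (intro sum_emeasure) (auto simp: borel)
  have "(\<Union>c\<in>F. cball c (1/2)) \<subseteq> cball y (\<rho> + 1/2)"
  proof
    fix x assume "x \<in> (\<Union>c\<in>F. cball c (1/2))"
    then obtain c where "c \<in> F" "dist c x \<le> 1/2" by auto
    then show "x \<in> cball y (\<rho> + 1/2)"
      using F(3) dist_triangle[of y x c] by auto
  qed
  then have "of_nat (card F) * (INF x. emeasure \<mu> (cball x (1/2)))
      \<le> emeasure \<mu> (cball y (\<rho> + 1/2))"
  proof -
    have "of_nat (card F) * (INF x. emeasure \<mu> (cball x (1/2)))
        = (\<Sum>c\<in>F. INF x. emeasure \<mu> (cball x (1/2)))" by simp
    also have "\<dots> \<le> (\<Sum>c\<in>F. emeasure \<mu> (cball c (1/2)))"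
      by (intro sum_mono INF_lower) simp
    also have "\<dots> \<le> emeasure \<mu> (cball y (\<rho> + 1/2))"
      unfolding disjoint using \<open>_ \<subseteq> cball y (\<rho> + 1/2)\<close> by (rule emeasure_mono) (simp add: borel)
    finally show ?thesis .
  qed
  also have "\<dots> \<le> (SUP x. emeasure \<mu> (cball x (\<rho> + 1/2)))" by (rule SUP_upper) simp
  finally show ?thesis .
qed

lemma card_separated_in_ball_bounded:
  fixes \<mu> :: "'a::metric_space measure"
  assumes borel: "sets \<mu> = sets borel"
    and unif: "(SUP x. emeasure \<mu> (cball x (\<rho> + 1/2))) < \<infinity>"
    and inf_pos: "(INF x. emeasure \<mu> (cball x (1/2))) > 0"
  obtains N where "N \<ge> 0"
    "\<And>(y::'a) F. finite F \<Longrightarrow> separated 1 F \<Longrightarrow> F \<subseteq> ball y \<rho> \<Longrightarrow> real (card F) \<le> N"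
proof -
  define I where "I = (INF x. emeasure \<mu> (cball x (1/2)))"
  define m where "m = enn2real (min I 1)"
  define S where "S = enn2real (SUP x. emeasure \<mu> (cball x (\<rho> + 1/2)))"
  have "0 < I" using inf_pos by (simp add: I_def)
  moreover have "min I 1 \<noteq> top" using min.cobounded2[of I 1] by (metis ennreal_one_neq_top top_unique)
  ultimately have m: "m > 0" "ennreal m \<le> (INF x. emeasure \<mu> (cball x (1/2)))"
    by (auto simp: m_def enn2real_positive_iff ennreal_enn2real top.not_eq_extremum I_def[symmetric])
  have S: "(SUP x. emeasure \<mu> (cball x (\<rho> + 1/2))) = ennreal S"
    using unif by (simp add: S_def)
  have "real (card F) \<le> S / m" if "finite F" "separated 1 F" "F \<subseteq> ball y \<rho>" for y :: 'a and F
  proof -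
    have "ennreal (real (card F) * m) \<le> of_nat (card F) * (INF x. emeasure \<mu> (cball x (1/2)))"
      using m by (simp add: ennreal_mult ennreal_of_nat_eq_real_of_nat mult_left_mono)
    also have "\<dots> \<le> ennreal S"
      using card_separated_in_ball_le[OF borel that] by (simp add: S)
    finally have "real (card F) * m \<le> S" by (simp add: S_def)
    then show ?thesis using m by (simp add: pos_le_divide_eq)
  qed
  moreover have "S / m \<ge> 0" using m by (simp add: S_def)
  ultimately show thesis using that by blast
qed

section \<open>Finite propagation and the tail estimate\<close>

definition propagation_le :: "'a::metric_space measure \<Rightarrow> (('a \<Rightarrow> complex) \<Rightarrow> ('a \<Rightarrow> complex)) \<Rightarrow> real \<Rightarrow> bool" where
  "propagation_le M T r \<longleftrightarrow> (\<forall>F G. closed F \<longrightarrow> closed G \<longrightarrow> setdist F G > r \<longrightarrow>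
     (\<forall>f\<in>L2 M. AE x in M. mult_ind F (T (mult_ind G f)) x = 0))"

lemma controlled_op_iff_propagation_le: "controlled_op M T \<longleftrightarrow> (\<exists>r>0. propagation_le M T r)"
  by (simp add: controlled_op_def propagation_le_def)

lemma propagation_le_localize:
  fixes M :: "'a::metric_space measure"
  assumes borel: "sets M = sets borel" and T: "bounded_op M T" "propagation_le M T r"
    and \<rho>: "s + r < \<rho>" and f: "f \<in> L2 M"
  shows "AE x in M. mult_ind (cball c s) (T f) x = mult_ind (cball c s) (T (mult_ind (ball c \<rho>) f)) x"
proof (cases "cball c s = {} \<or> ball c \<rho> = UNIV")
  case True
  then show ?thesis by (auto simp: mult_ind_def)
next
  case False
  define G where "G = - ball c \<rho>"
  have "r < setdist (cball c s) G"
  proof -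
    have "\<rho> - s \<le> setdist (cball c s) G"
    proof (rule le_setdistI)
      fix a b assume "a \<in> cball c s" "b \<in> G"
      then show "\<rho> - s \<le> dist a b" using dist_triangle[of c b a] by (simp add: G_def)
    qed (use False in \<open>auto simp: G_def\<close>)
    then show ?thesis using \<rho> by simp
  qed
  moreover have "closed G" by (simp add: G_def closed_Compl)
  ultimately have far: "AE x in M. mult_ind (cball c s) (T (mult_ind G f)) x = 0"
    using T(2) f unfolding propagation_le_def by blast
  have split: "T f = (\<lambda>x. T (mult_ind (ball c \<rho>) f) x + T (mult_ind G f) x)"
  proof -
    have "f = (\<lambda>x. mult_ind (ball c \<rho>) f x + mult_ind G f x)"
      by (auto simp: mult_ind_def G_def split: split_indicator)
    moreover have "ball c \<rho> \<in> sets M" "G \<in> sets M"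
      using borel by (simp_all add: G_def borel_closed)
    ultimately show ?thesis
      using bounded_op_add[OF T(1) L2_mult_ind L2_mult_ind] f by metis
  qed
  from far show ?thesis by eventually_elim (subst split, simp add: mult_ind_def distrib_left)
qed

lemma L2sq_local_le:
  fixes M :: "'a::metric_space measure"
  assumes borel: "sets M = sets borel" and T: "bounded_op M T" "propagation_le M T r"
    and \<rho>: "s + r < \<rho>" and \<epsilon>: "op_norm M (\<lambda>f. mult_ind (cball c s) (T f)) \<le> \<epsilon>" "0 \<le> \<epsilon>"
    and f: "f \<in> L2 M"
  shows "L2sq M (mult_ind (cball c s) (T f)) \<le> ennreal (\<epsilon>\<^sup>2) * L2sq M (mult_ind (ball c \<rho>) f)"
proof -
  define h where "h = mult_ind (ball c \<rho>) f"
  have sets: "cball c s \<in> sets M" "ball c \<rho> \<in> sets M" using borel by simp_all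
  have h: "h \<in> L2 M" unfolding h_def using sets(2) f by (rule L2_mult_ind)
  have "L2sq M (mult_ind (cball c s) (T f)) = L2sq M (mult_ind (cball c s) (T h))"
    unfolding h_def by (rule L2sq_cong_AE propagation_le_localize[OF borel T \<rho> f])+
  also have "\<dots> \<le> ennreal (\<epsilon>\<^sup>2) * L2sq M h"
  proof (rule L2sq_le_mult_if_L2norm_le_mult)
    have "L2norm M (mult_ind (cball c s) (T h)) \<le> op_norm M (\<lambda>f. mult_ind (cball c s) (T f)) * L2norm M h"
      using L2norm_le_op_norm[OF bounded_op_mult_ind[OF T(1) sets(1)] h] .
    also have "\<dots> \<le> \<epsilon> * L2norm M h" using \<epsilon> by (intro mult_right_mono L2norm_nonneg)
    finally show "L2norm M (mult_ind (cball c s) (T h)) \<le> \<epsilon> * L2norm M h" .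
  qed (use h sets T \<epsilon> in \<open>simp_all add: L2_mult_ind bounded_op_L2\<close>)
  finally show ?thesis by (simp add: h_def)
qed

lemma sum_indicator_ball_le:
  fixes F :: "'a::metric_space set"
  assumes "finite F" "separated 1 F"
    and N: "\<And>G. finite G \<Longrightarrow> separated 1 G \<Longrightarrow> G \<subseteq> ball x \<rho> \<Longrightarrow> real (card G) \<le> N"
  shows "(\<Sum>c\<in>F. indicator (ball c \<rho>) x :: ennreal) \<le> ennreal N"
proof -
  have "(\<Sum>c\<in>F. indicator (ball c \<rho>) x :: ennreal) = (\<Sum>c\<in>F. indicator (ball x \<rho>) c)"
    by (simp add: indicator_def dist_commute)
  also have "\<dots> = of_nat (card (F \<inter> ball x \<rho>))"
    using assms(1) by (simp add: indicator_def sum.If_cases Int_def)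
  also have "\<dots> \<le> ennreal N"
    using N[of "F \<inter> ball x \<rho>"] assms(1,2) separated_subset[OF assms(2), of "F \<inter> ball x \<rho>"]
    by (simp add: ennreal_of_nat_eq_real_of_nat ennreal_leI)
  finally show ?thesis .
qed

lemma L2sq_mult_ind_compact_le:
  fixes M :: "'a::metric_space measure"
  assumes borel: "sets M = sets borel" and T: "bounded_op M T" "propagation_le M T r"
    and \<rho>: "1 + r < \<rho>"
    and N: "\<And>(y::'a) F. finite F \<Longrightarrow> separated 1 F \<Longrightarrow> F \<subseteq> ball y \<rho> \<Longrightarrow> real (card F) \<le> N"
    and C: "compact C"
    and \<epsilon>: "\<And>c. c \<in> C \<Longrightarrow> op_norm M (\<lambda>f. mult_ind (cball c 1) (T f)) \<le> \<epsilon>" "0 \<le> \<epsilon>"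
    and f: "f \<in> L2 M"
  shows "L2sq M (mult_ind C (T f)) \<le> ennreal (\<epsilon>\<^sup>2 * N) * L2sq M f"
proof -
  obtain F where F: "finite F" "F \<subseteq> C" "separated 1 F" "C \<subseteq> (\<Union>c\<in>F. cball c 1)"
    using compact_separated_net[OF C, of 1] by auto
  have "N \<ge> 0" using N[of "{}"] by (simp add: separated_def)
  have [measurable]: "f \<in> borel_measurable M" "T f \<in> borel_measurable M"
    using f T(1) by (simp_all add: L2_measurable bounded_op_L2)
  have [measurable]: "cball c t \<in> sets M" "ball c t \<in> sets M" for c t
    using borel by simp_all
  define gT where "gT x = ennreal ((cmod (T f x))\<^sup>2)" for x
  define gf where "gf x = ennreal ((cmod (f x))\<^sup>2)" for x
  have [measurable]: "gT \<in> borel_measurable M" "gf \<in> borel_measurable M"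
    unfolding gT_def gf_def by measurable
  have "L2sq M (mult_ind C (T f)) \<le> (\<integral>\<^sup>+x. (\<Sum>c\<in>F. indicator (cball c 1) x * gT x) \<partial>M)"
    unfolding L2sq_mult_ind gT_def[symmetric]
  proof (rule nn_integral_mono)
    fix x
    show "indicator C x * gT x \<le> (\<Sum>c\<in>F. indicator (cball c 1) x * gT x)"
    proof (cases "x \<in> C")
      case True
      then obtain c where "c \<in> F" "x \<in> cball c 1" using F(4) by blast
      then show ?thesis
        using True member_le_sum[of c F "\<lambda>c. indicator (cball c 1) x * gT x"] F(1) by simp
    qed simp
  qed
  also have "\<dots> = (\<Sum>c\<in>F. L2sq M (mult_ind (cball c 1) (T f)))"
    by (simp add: nn_integral_sum L2sq_mult_ind gT_def)
  also have "\<dots> \<le> (\<Sum>c\<in>F. ennreal (\<epsilon>\<^sup>2) * L2sq M (mult_ind (ball c \<rho>) f))"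
    using F(2) \<epsilon> by (intro sum_mono L2sq_local_le[OF borel T \<rho> _ _ f]) auto
  also have "\<dots> = ennreal (\<epsilon>\<^sup>2) * (\<integral>\<^sup>+x. (\<Sum>c\<in>F. indicator (ball c \<rho>) x) * gf x \<partial>M)"
    by (simp add: nn_integral_sum L2sq_mult_ind gf_def sum_distrib_left sum_distrib_right)
  also have "\<dots> \<le> ennreal (\<epsilon>\<^sup>2) * (\<integral>\<^sup>+x. ennreal N * gf x \<partial>M)"
    using F(1,3) N by (intro mult_left_mono nn_integral_mono mult_right_mono sum_indicator_ball_le) auto
  also have "\<dots> = ennreal (\<epsilon>\<^sup>2 * N) * L2sq M f"
    using \<open>N \<ge> 0\<close> by (simp add: nn_integral_cmult L2sq_def gf_def ennreal_mult mult.assoc)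
  finally show ?thesis .
qed

lemma incseq_cball_nat: "incseq (\<lambda>n::nat. cball z (real n))"
  by (auto simp: incseq_def intro: subset_cball)

lemma UN_cball_nat: "(\<Union>n::nat. cball z (real n)) = UNIV"
  by (auto intro: real_arch_simple)

lemma L2sq_outside_ball_le:
  fixes \<mu> :: "'a::metric_space measure"
  assumes proper: "\<And>(x::'a) r. compact (cball x r)"
    and borel: "sets \<mu> = sets borel" and T: "bounded_op \<mu> T" "propagation_le \<mu> T r"
    and \<rho>: "1 + r < \<rho>"
    and N: "\<And>(y::'a) F. finite F \<Longrightarrow> separated 1 F \<Longrightarrow> F \<subseteq> ball y \<rho> \<Longrightarrow> real (card F) \<le> N"
    and \<epsilon>: "\<And>c. c \<notin> ball z R \<Longrightarrow> op_norm \<mu> (\<lambda>f. mult_ind (cball c 1) (T f)) \<le> \<epsilon>" "0 \<le> \<epsilon>"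
    and f: "f \<in> L2 \<mu>"
  shows "L2sq \<mu> (mult_ind (- ball z R) (T f)) \<le> ennreal (\<epsilon>\<^sup>2 * N) * L2sq \<mu> f"
proof -
  have [measurable]: "T f \<in> borel_measurable \<mu>" using f T(1) by (simp add: L2_measurable bounded_op_L2)
  have "L2sq \<mu> (mult_ind (- ball z R) (T f))
      = (SUP n. L2sq \<mu> (mult_ind (cball z (real n)) (mult_ind (- ball z R) (T f))))"
    using borel by (intro L2sq_eq_SUP_mult_ind incseq_cball_nat) (simp_all add: UN_cball_nat borel_closed)
  also have "\<dots> \<le> ennreal (\<epsilon>\<^sup>2 * N) * L2sq \<mu> f"
  proof (rule SUP_least, unfold mult_ind_mult_ind)
    fix n
    show "L2sq \<mu> (mult_ind (cball z (real n) \<inter> - ball z R) (T f)) \<le> ennreal (\<epsilon>\<^sup>2 * N) * L2sq \<mu> f"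
    proof (rule L2sq_mult_ind_compact_le[OF borel T \<rho> N _ _ \<epsilon>(2) f])
      show "compact (cball z (real n) \<inter> - ball z R)"
        using proper by (simp add: compact_Int_closed closed_Compl)
    qed (use \<epsilon>(1) in auto)
  qed
  finally show ?thesis .
qed

lemma L2sq_tail_le:
  fixes \<mu> :: "'a::metric_space measure"
  assumes proper: "\<And>(x::'a) r. compact (cball x r)"
    and borel: "sets \<mu> = sets borel" and T: "bounded_op \<mu> T" "propagation_le \<mu> T r"
    and unif: "\<And>r. r > 0 \<Longrightarrow> (SUP x. emeasure \<mu> (cball x r)) < \<infinity>"
    and inf_pos: "(INF x. emeasure \<mu> (cball x (1/2))) > 0"
    and decay: "\<forall>\<epsilon>>0. \<exists>K. compact K \<and>
                  (\<forall>x. x \<notin> K \<longrightarrow> op_norm \<mu> (\<lambda>f. mult_ind (cball x 1) (T f)) < \<epsilon>)"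
    and \<delta>: "\<delta> > 0"
  obtains j :: nat where
    "\<And>f. f \<in> L2 \<mu> \<Longrightarrow> L2sq \<mu> (mult_ind (space \<mu> - cball z (real j)) (T f)) \<le> ennreal \<delta> * L2sq \<mu> f"
proof -
  define \<rho> where "\<rho> = \<bar>r\<bar> + 2"
  have "\<rho> + 1/2 > 0" "1 + r < \<rho>" by (simp_all add: \<rho>_def)
  obtain N where N: "N \<ge> 0"
    "\<And>(y::'a) F. finite F \<Longrightarrow> separated 1 F \<Longrightarrow> F \<subseteq> ball y \<rho> \<Longrightarrow> real (card F) \<le> N"
    using card_separated_in_ball_bounded[OF borel unif[OF \<open>\<rho> + 1/2 > 0\<close>] inf_pos] by blast
  define \<epsilon> where "\<epsilon> = sqrt (\<delta> / (N + 1))"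
  have "\<epsilon> > 0" using \<delta> N(1) by (simp add: \<epsilon>_def)
  have "\<epsilon>\<^sup>2 * N \<le> \<delta>"
  proof -
    have "\<epsilon>\<^sup>2 * N = \<delta> * (N / (N + 1))" using \<delta> N(1) by (simp add: \<epsilon>_def)
    also have "\<dots> \<le> \<delta>" using \<delta> N(1) by (intro mult_left_le) simp_all
    finally show ?thesis .
  qed
  obtain K where K: "compact K" "\<And>x. x \<notin> K \<Longrightarrow> op_norm \<mu> (\<lambda>f. mult_ind (cball x 1) (T f)) < \<epsilon>"
    using decay \<open>\<epsilon> > 0\<close> by blast
  obtain R where "K \<subseteq> ball z R"
    using bounded_subset_ballD[OF compact_imp_bounded[OF K(1)]] by blast
  define j where "j = nat \<lceil>R\<rceil>"
  have "space \<mu> - cball z (real j) \<subseteq> - ball z R"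
    using real_nat_ceiling_ge[of R] by (auto simp: j_def)
  have "L2sq \<mu> (mult_ind (space \<mu> - cball z (real j)) (T f)) \<le> ennreal \<delta> * L2sq \<mu> f"
    if f: "f \<in> L2 \<mu>" for f
  proof -
    have "L2sq \<mu> (mult_ind (space \<mu> - cball z (real j)) (T f)) \<le> L2sq \<mu> (mult_ind (- ball z R) (T f))"
      by (rule L2sq_mult_ind_mono) fact
    also have "\<dots> \<le> ennreal (\<epsilon>\<^sup>2 * N) * L2sq \<mu> f"
      using \<open>K \<subseteq> ball z R\<close> K(2) \<open>\<epsilon> > 0\<close>
      by (intro L2sq_outside_ball_le[OF proper borel T \<open>1 + r < \<rho>\<close> N(2) _ _ f]) (auto simp: subset_eq less_imp_le)
    also have "\<dots> \<le> ennreal \<delta> * L2sq \<mu> f"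
      using \<open>\<epsilon>\<^sup>2 * N \<le> \<delta>\<close> by (intro mult_right_mono ennreal_leI) simp_all
    finally show ?thesis .
  qed
  then show thesis using that by blast
qed

theorem lemma3p8:
  fixes \<mu> :: "'a::metric_space measure"
    and T :: "('a \<Rightarrow> complex) \<Rightarrow> ('a \<Rightarrow> complex)"
  assumes proper: "\<And>(x::'a) r. compact (cball x r)"
    and noncompact: "\<not> compact (UNIV :: 'a set)"
    and borel: "sets \<mu> = sets borel"
    and pos: "\<And>x r. r > 0 \<Longrightarrow> emeasure \<mu> (cball x r) > 0"
    and unif: "\<And>r. r > 0 \<Longrightarrow> (SUP x. emeasure \<mu> (cball x r)) < \<infinity>"
    and inf_pos: "(INF x. emeasure \<mu> (cball x (1/2))) > 0"
    and bnd: "bounded_op \<mu> T"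
    and ctrl: "controlled_op \<mu> T"
    and lc: "locally_compact_op \<mu> T"
    and decay: "\<forall>\<epsilon>>0. \<exists>K. compact K \<and>
                  (\<forall>x. x \<notin> K \<longrightarrow> op_norm \<mu> (\<lambda>f. mult_ind (cball x 1) (T f)) < \<epsilon>)"
  shows "compact_op \<mu> T"
  unfolding compact_op_def
proof (intro allI impI)
  fix s :: "nat \<Rightarrow> 'a \<Rightarrow> complex" and z :: 'a
  assume s: "\<forall>n. s n \<in> L2 \<mu> \<and> L2norm \<mu> (s n) \<le> 1"
  then have s_L2sq: "L2sq \<mu> (s n) \<le> 1" for n using L2sq_le_of_L2norm_le[of "s n" \<mu> 1] by simp
  define L where "L j = cball z (real j)" for j :: nat
  have L: "\<And>j. L j \<in> sets \<mu>" "incseq L" "space \<mu> \<subseteq> (\<Union>j. L j)"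
    using borel by (simp_all add: L_def[abs_def] incseq_cball_nat UN_cball_nat)
  obtain \<sigma> where \<sigma>: "strict_mono \<sigma>"
    "\<And>j. \<exists>G\<in>L2 \<mu>. (\<lambda>n. L2norm \<mu> (\<lambda>x. mult_ind (L j) (T (s (\<sigma> n))) x - G x)) \<longlonglongrightarrow> 0"
    using compact_ops_common_subseq[of \<mu> "\<lambda>j f. mult_ind (L j) (T f)" s] lc proper s
    by (auto simp: locally_compact_op_def L_def)
  obtain r where r: "propagation_le \<mu> T r"
    using ctrl by (auto simp: controlled_op_iff_propagation_le)
  have tight: "\<exists>j. \<forall>n. L2sq \<mu> (mult_ind (space \<mu> - L j) (T (s (\<sigma> n)))) \<le> ennreal e" if e: "e > 0" for e
  proof -
    obtain j where j: "\<And>f. f \<in> L2 \<mu> \<Longrightarrow> L2sq \<mu> (mult_ind (space \<mu> - L j) (T f)) \<le> ennreal e * L2sq \<mu> f"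
      using L2sq_tail_le[OF proper borel bnd r unif inf_pos decay e] unfolding L_def by blast
    have "ennreal e * L2sq \<mu> (s n) \<le> ennreal e" for n
      using mult_left_mono[OF s_L2sq[of n], of "ennreal e"] by simp
    then show ?thesis using j s by (meson order_trans)
  qed
  obtain B where "\<And>f. f \<in> L2 \<mu> \<Longrightarrow> L2norm \<mu> f \<le> 1 \<Longrightarrow> L2sq \<mu> (T f) \<le> ennreal B"
    using bounded_op_L2sq_bound[OF bnd] by blast
  then have T_s: "T (s (\<sigma> n)) \<in> L2 \<mu>" "L2sq \<mu> (T (s (\<sigma> n))) \<le> ennreal B" for n
    using s bnd by (simp_all add: bounded_op_L2)
  show "\<exists>r g. strict_mono r \<and> g \<in> L2 \<mu> \<and> (\<lambda>n. L2norm \<mu> (\<lambda>x. T (s (r n)) x - g x)) \<longlonglongrightarrow> 0"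
    using L2_convergent_if_locally_convergent_and_tight[OF L T_s \<sigma>(2) tight] \<sigma>(1) by blast
qed

end
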